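(* Let $q$ be a prime power and let $n_1,n_2$ be coprime odd positive integers, each coprime to $q$. If every irreducible monic factor of $x^{n_1}-1$ in $\mathbb{F}_{q^2}[x]$ is SCRIM and $x-1$ is the only SCRIM factor of $x^{n_2}-1$ in $\mathbb{F}_{q^2}[x]$, then $|\Omega_{q^2,n_1n_2}|=|\Omega_{q^2,n_1}|$.
   Context: $\mathbb{F}_{q^2}$ is the finite field with $q^2$ elements. For $\alpha\in\mathbb{F}_{q^2}$ put $\bar\alpha=\alpha^q$, and for $f(x)=\sum_i f_ix^i$ put $\overline{f(x)}=\sum_i \bar f_i x^i$. For $f(x)$ with $f(0)\neq 0$, $f^*(x)=x^{\deg f}f(0)^{-1}f(1/x)$ and $f^\dagger(x)=\overline{f^*(x)}$. A polynomial is SCRIM if it is monic, irreducible over $\mathbb{F}_{q^2}$, has nonzero constant term, and satisfies $f=f^\dagger$. $\Omega_{q^2,n}$ denotes the set of SCRIM polynomials in $\mathbb{F}_{q^2}[x]$ dividing $x^n-1$. *)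

theory Defs
  imports "HOL-Computational_Algebra.Computational_Algebra"
begin

text \<open>Conjugation on F_{q^2}: alpha bar = alpha^q, extended coefficientwise to polynomials.\<close>
definition poly_conj :: "nat \<Rightarrow> 'a::field poly \<Rightarrow> 'a poly" where
  "poly_conj q f = map_poly (\<lambda>a. a ^ q) f"

text \<open>Reciprocal f^*(x) = x^(deg f) f(0)^(-1) f(1/x); note x^(deg f) f(1/x) = reflect_poly f.\<close>
definition recip_poly :: "'a::field poly \<Rightarrow> 'a poly" where
  "recip_poly f = smult (inverse (coeff f 0)) (reflect_poly f)"

definition dagger :: "nat \<Rightarrow> 'a::field poly \<Rightarrow> 'a poly" where
  "dagger q f = poly_conj q (recip_poly f)"

definition scrim :: "nat \<Rightarrow> 'a::field poly \<Rightarrow> bool" where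
  "scrim q f \<longleftrightarrow> lead_coeff f = 1 \<and> irreducible f \<and> coeff f 0 \<noteq> 0 \<and> f = dagger q f"

definition Omega :: "nat \<Rightarrow> nat \<Rightarrow> 'a::field poly set" where
  "Omega q n = {f. scrim q f \<and> f dvd (monom 1 n - 1)}"

end

theory Submission
  imports Defs "HOL-Algebra.Algebraic_Closure_Type" "HOL-Number_Theory.Residues"
begin

text \<open>
  Let f be SCRIM with f | x^(n1 n2) - 1 and let y be a root of f in the algebraic closure.
  Since f is its own dagger, the roots of f are closed under y \<mapsto> y^(-q). Pick a with
  n1 a = 1 (mod n2); then z = y^(n1 a) is an n2-th root of unity, and since f divides
  g(x^(n1 a)) for the minimal polynomial g of z, the roots of g inherit the closure property,
  so g is SCRIM. As g | x^n2 - 1, this forces g = x - 1, i.e. z = 1, whence y^n1 = 1 and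
  f | x^n1 - 1. Thus the two sets \<Omega> coincide.
\<close>

hide_const (open) up_ring.monom Module.module.smult Polynomials.degree Polynomials.lead_coeff
  Divisibility.irreducible Divisibility.prime up_ring.coeff

lemma CHAR_eq_if_card_eq_prime_power:
  assumes "card (UNIV :: 'a::{field,finite} set) = p ^ m" "prime p" "m > 0"
  shows "CHAR('a) = p"
proof -
  have "prime CHAR('a)"
    by (simp add: finite_imp_CHAR_pos prime_CHAR_semidom)
  moreover have "CHAR('a) dvd p ^ m"
    using CHAR_dvd_CARD[where 'a = 'a] assms(1) by simp
  ultimately show ?thesis
    using assms(2) by (metis prime_dvd_power primes_dvd_imp_eq)
qed

lemma X_pow_minus_1_dvd:
  assumes "m dvd n"
  shows "monom (1::'a::comm_ring_1) m - 1 dvd monom 1 n - 1"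
proof -
  obtain c where "n = m * c" using assms by blast
  then have "monom (1::'a) n = monom 1 m ^ c" by (simp add: monom_power)
  then show ?thesis by (metis power_diff_1_eq dvd_triv_left)
qed

lemma poly_poly_conj_power:
  fixes g :: "'a::field poly"
  assumes char: "prime CHAR('a)" and q: "q = CHAR('a) ^ k"
  shows "poly (poly_conj q g) (y ^ q) = poly g y ^ q"
proof -
  have "q > 0" using char q by (simp add: prime_gt_0_nat)
  then have coeff_conj: "coeff (poly_conj q g) i = coeff g i ^ q" for i
    by (simp add: poly_conj_def coeff_map_poly)
  have "degree (poly_conj q g) = degree g"
    using \<open>q > 0\<close> by (simp add: poly_conj_def degree_map_poly)
  then have "poly (poly_conj q g) (y ^ q) = (\<Sum>i\<le>degree g. (coeff g i * y ^ i) ^ q)"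
    by (simp add: poly_altdef coeff_conj power_mult_distrib flip: power_mult)
      (simp add: mult.commute)
  also have "\<dots> = (\<Sum>i\<le>degree g. coeff g i * y ^ i) ^ q"
    by (simp only: freshmans_dream_sum'[OF char q])
  finally show ?thesis by (simp add: poly_altdef)
qed

lemma poly_dagger_inverse_power_eq_0:
  fixes h :: "'a::field poly"
  assumes char: "prime CHAR('a)" and q: "q = CHAR('a) ^ k"
    and "y \<noteq> 0" "poly h y = 0"
  shows "poly (dagger q h) (inverse y ^ q) = 0"
proof -
  have "poly (recip_poly h) (inverse y) = 0"
    using assms(3,4) by (simp add: recip_poly_def poly_reflect_poly_nz)
  moreover have "q > 0" using char q by (simp add: prime_gt_0_nat)
  ultimately show ?thesis
    by (simp add: dagger_def poly_poly_conj_power[OF char q])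
qed

lemma
  fixes h :: "'a::field poly"
  assumes "coeff h 0 \<noteq> 0" "q > 0"
  shows degree_dagger: "degree (dagger q h) = degree h"
    and lead_coeff_dagger: "lead_coeff (dagger q h) = 1"
proof -
  have "degree (recip_poly h) = degree h" "lead_coeff (recip_poly h) = 1"
    using assms(1) by (simp_all add: recip_poly_def coeff_reflect_poly)
  with assms(2) show "degree (dagger q h) = degree h" "lead_coeff (dagger q h) = 1"
    by (simp_all add: dagger_def poly_conj_def degree_map_poly coeff_map_poly)
qed

lemma monic_dvd_eq_if_degree_eq:
  fixes g h :: "'a::idom poly"
  assumes "lead_coeff g = 1" "lead_coeff h = 1" "degree h = degree g" "g dvd h"
  shows "g = h"
proof -
  obtain k where k: "h = g * k" using assms(4) by blast
  with assms(2) have "g \<noteq> 0" "k \<noteq> 0" by auto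
  with k assms(3) have "degree k = 0" by (simp add: degree_mult_eq)
  moreover have "lead_coeff k = 1"
    using assms(1,2) by (simp add: k lead_coeff_mult)
  ultimately have "k = 1" by (auto elim!: degree_eq_zeroE)
  with k show ?thesis by simp
qed

abbreviation to_ac_poly :: "'a::field poly \<Rightarrow> 'a alg_closure poly" where
  "to_ac_poly p \<equiv> map_poly to_ac p"

lemma to_ac_poly_add: "to_ac_poly (p + q) = to_ac_poly p + to_ac_poly q"
  by (intro poly_eqI) (simp add: coeff_map_poly)

lemma to_ac_poly_diff: "to_ac_poly (p - q) = to_ac_poly p - to_ac_poly q"
  by (intro poly_eqI) (simp add: coeff_map_poly)

lemma to_ac_poly_mult: "to_ac_poly (p * q) = to_ac_poly p * to_ac_poly q"
  by (intro poly_eqI) (simp add: coeff_map_poly coeff_mult to_ac_sum)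

lemma to_ac_poly_smult: "to_ac_poly (smult c p) = smult (to_ac c) (to_ac_poly p)"
  by (intro poly_eqI) (simp add: coeff_map_poly)

lemma to_ac_poly_monom: "to_ac_poly (monom c n) = monom (to_ac c) n"
  by (simp add: map_poly_monom)

lemma degree_to_ac_poly [simp]: "degree (to_ac_poly p) = degree p"
  by (simp add: degree_map_poly)

lemma to_ac_poly_pcompose: "to_ac_poly (pcompose p r) = pcompose (to_ac_poly p) (to_ac_poly r)"
  by (induction p) (simp_all add: pcompose_pCons map_poly_pCons to_ac_poly_add to_ac_poly_mult)

lemma to_ac_poly_prod_mset: "to_ac_poly (prod_mset A) = prod_mset (image_mset to_ac_poly A)"
  by (induction A) (simp_all add: to_ac_poly_mult)

lemma to_ac_poly_reflect_poly: "to_ac_poly (reflect_poly p) = reflect_poly (to_ac_poly p)"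
  by (intro poly_eqI) (simp add: coeff_map_poly coeff_reflect_poly)

(* q > 0 is needed because for q = 0 the map a \<mapsto> a ^ q does not fix 0. *)
lemma to_ac_poly_poly_conj: "q > 0 \<Longrightarrow> to_ac_poly (poly_conj q p) = poly_conj q (to_ac_poly p)"
  unfolding poly_conj_def by (intro poly_eqI) (simp add: coeff_map_poly)

lemma to_ac_poly_dagger: "q > 0 \<Longrightarrow> to_ac_poly (dagger q p) = dagger q (to_ac_poly p)"
  by (simp add: dagger_def recip_poly_def to_ac_poly_poly_conj to_ac_poly_smult
      to_ac_poly_reflect_poly coeff_map_poly)

lemma poly_to_ac_poly_const [simp]: "poly (to_ac_poly [:c:]) y = to_ac c"
  by (simp add: map_poly_pCons)

lemma poly_to_ac_poly_X_pow_minus_1: "poly (to_ac_poly (monom 1 n - 1)) y = y ^ n - 1"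
  by (simp add: to_ac_poly_diff to_ac_poly_monom poly_monom)

lemma poly_to_ac_poly_eq_0_dvd:
  assumes "f dvd h" "poly (to_ac_poly f) y = 0"
  shows "poly (to_ac_poly h) y = 0"
  using assms by (auto simp: to_ac_poly_mult)

lemma poly_to_ac_poly_mod_eq_0:
  assumes "poly (to_ac_poly h) y = 0" "poly (to_ac_poly f) y = 0"
  shows "poly (to_ac_poly (h mod f)) y = 0"
proof -
  have "h mod f = h - (h div f) * f" by (simp add: minus_div_mult_eq_mod)
  then show ?thesis using assms by (simp add: to_ac_poly_diff to_ac_poly_mult)
qed

lemma root_nonzero_if_coeff_0_nonzero:
  assumes "coeff f 0 \<noteq> 0" "poly (to_ac_poly f) y = 0"
  shows "y \<noteq> 0"
  using assms by (auto simp: poly_0_coeff_0 coeff_map_poly)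

lemma irreducible_no_root_of_smaller_degree:
  fixes f p :: "'a::field poly"
  assumes irr: "irreducible f" and fy: "poly (to_ac_poly f) y = 0"
    and "p \<noteq> 0" "degree p < degree f"
  shows "poly (to_ac_poly p) y \<noteq> 0"
  using assms(3,4)
proof (induction "degree p" arbitrary: p rule: less_induct)
  case less
  show ?case
  proof
    assume py: "poly (to_ac_poly p) y = 0"
    have "degree p \<noteq> 0"
    proof
      assume "degree p = 0"
      then obtain c where "p = [:c:]" by (rule degree_eq_zeroE)
      with py \<open>p \<noteq> 0\<close> show False by simp
    qed
    then have "\<not> is_unit p" by (simp add: is_unit_iff_degree \<open>p \<noteq> 0\<close>)
    have "f mod p \<noteq> 0"
    proof
      assume "f mod p = 0"
      then have "f = (f div p) * p" using div_mult_mod_eq[of f p] by simp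
      with irr \<open>\<not> is_unit p\<close> have "is_unit (f div p)"
        using Factorial_Ring.irreducibleD by blast
      then have "degree f = degree p"
        using \<open>f = (f div p) * p\<close> by (metis degree_mult_eq is_unit_iff_degree add_0 mult_eq_0_iff
            irr not_irreducible_zero)
      with less.prems show False by simp
    qed
    then have "degree (f mod p) < degree p"
      using degree_mod_less \<open>p \<noteq> 0\<close> by blast
    moreover have "poly (to_ac_poly (f mod p)) y = 0"
      using fy py by (rule poly_to_ac_poly_mod_eq_0)
    ultimately show False
      using less.hyps \<open>f mod p \<noteq> 0\<close> less.prems(2) by fastforce
  qed
qed

lemma irreducible_dvd_if_common_root:
  fixes f h :: "'a::field poly"
  assumes irr: "irreducible f"
    and fy: "poly (to_ac_poly f) y = 0" and hy: "poly (to_ac_poly h) y = 0"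
  shows "f dvd h"
proof (rule ccontr)
  assume "\<not> f dvd h"
  moreover have "f \<noteq> 0" using irr by auto
  ultimately have "h mod f \<noteq> 0" "degree (h mod f) < degree f"
    using degree_mod_less[of f h] by (auto simp: mod_eq_0_iff_dvd)
  with irreducible_no_root_of_smaller_degree[OF irr fy] poly_to_ac_poly_mod_eq_0[OF hy fy]
  show False by blast
qed

lemma irreducible_dvd_X_pow_minus_1_iff:
  assumes "irreducible f" "poly (to_ac_poly f) y = 0"
  shows "f dvd monom 1 n - 1 \<longleftrightarrow> y ^ n = 1"
  using assms irreducible_dvd_if_common_root[OF assms] poly_to_ac_poly_eq_0_dvd
  by (metis poly_to_ac_poly_X_pow_minus_1 right_minus_eq)

lemma monic_irreducible_factor_with_root:
  fixes P :: "'a::field poly"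
  assumes "P \<noteq> 0" "poly (to_ac_poly P) y = 0"
  obtains g where "lead_coeff g = 1" "irreducible g" "g dvd P" "poly (to_ac_poly g) y = 0"
proof -
  obtain A where A: "prod_mset A = smult (inverse (lead_coeff P)) P"
    and A_prime: "\<And>x. x \<in># A \<Longrightarrow> prime_elem x"
    using field_poly_prod_mset_prime_factorization[OF assms(1)]
      field_poly_in_prime_factorization_imp_prime by blast
  have "poly (to_ac_poly (prod_mset A)) y = 0"
    using assms(2) by (simp add: A to_ac_poly_smult)
  then obtain x where xA: "x \<in># A" and xy: "poly (to_ac_poly x) y = 0"
    by (auto simp: to_ac_poly_prod_mset poly_prod_mset prod_mset_zero_iff)
  have "x \<noteq> 0" using A_prime[OF xA] by auto
  have "x dvd P"
    using dvd_prod_mset[OF xA] assms(1) by (simp add: A dvd_smult_iff)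
  define g where "g = smult (inverse (lead_coeff x)) x"
  have "irreducible ([:inverse (lead_coeff x):] * x)"
    using prime_elem_imp_irreducible[OF A_prime[OF xA]] \<open>x \<noteq> 0\<close>
    by (subst irreducible_mult_unit_left) (simp_all add: is_unit_const_poly_iff dvd_field_iff)
  then have "irreducible g" by (simp add: g_def)
  moreover have "lead_coeff g = 1" "g dvd P" "poly (to_ac_poly g) y = 0"
    using \<open>x \<noteq> 0\<close> \<open>x dvd P\<close> xy by (simp_all add: g_def smult_dvd to_ac_poly_smult)
  ultimately show ?thesis using that by blast
qed

lemma poly_to_ac_poly_dagger_inverse_power_eq_0:
  fixes h :: "'a::field poly"
  assumes char: "prime CHAR('a)" and q: "q = CHAR('a) ^ k"
    and "y \<noteq> 0" "poly (to_ac_poly h) y = 0"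
  shows "poly (to_ac_poly (dagger q h)) (inverse y ^ q) = 0"
proof -
  have "q > 0" using char q by (simp add: prime_gt_0_nat)
  have "prime CHAR('a alg_closure)" "q = CHAR('a alg_closure) ^ k"
    using char q by simp_all
  from poly_dagger_inverse_power_eq_0[OF this assms(3,4)] show ?thesis
    by (simp add: to_ac_poly_dagger[OF \<open>q > 0\<close>])
qed

lemma scrim_root_inverse_power:
  fixes f :: "'a::field poly"
  assumes char: "prime CHAR('a)" and q: "q = CHAR('a) ^ k"
    and "scrim q f" "poly (to_ac_poly f) y = 0"
  shows "poly (to_ac_poly f) (inverse y ^ q) = 0"
proof -
  have "f = dagger q f" "coeff f 0 \<noteq> 0" using assms(3) by (simp_all add: scrim_def)
  then show ?thesis
    using poly_to_ac_poly_dagger_inverse_power_eq_0[OF char q] root_nonzero_if_coeff_0_nonzero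
      assms(4) by metis
qed

lemma scrimI_root_inverse_power:
  fixes g :: "'a::field poly"
  assumes char: "prime CHAR('a)" and q: "q = CHAR('a) ^ k"
    and monic: "lead_coeff g = 1" and irr: "irreducible g" and g0: "coeff g 0 \<noteq> 0"
    and root: "poly (to_ac_poly g) y = 0" and root': "poly (to_ac_poly g) (inverse y ^ q) = 0"
  shows "scrim q g"
proof -
  have "q > 0" using char q by (simp add: prime_gt_0_nat)
  have "y \<noteq> 0" using g0 root by (rule root_nonzero_if_coeff_0_nonzero)
  then have "poly (to_ac_poly (dagger q g)) (inverse y ^ q) = 0"
    using poly_to_ac_poly_dagger_inverse_power_eq_0[OF char q] root by blast
  then have "g dvd dagger q g"
    using irreducible_dvd_if_common_root[OF irr root'] by blast
  then have "g = dagger q g"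
    using monic_dvd_eq_if_degree_eq monic lead_coeff_dagger degree_dagger g0 \<open>q > 0\<close> by blast
  with monic irr g0 show ?thesis by (simp add: scrim_def)
qed

lemma scrim_minimal_polynomial_of_power:
  fixes f g :: "'a::field poly"
  assumes char: "prime CHAR('a)" and q: "q = CHAR('a) ^ k"
    and f: "scrim q f" "poly (to_ac_poly f) y = 0"
    and g: "lead_coeff g = 1" "irreducible g" "coeff g 0 \<noteq> 0" "poly (to_ac_poly g) (y ^ e) = 0"
  shows "scrim q g"
proof (rule scrimI_root_inverse_power[OF char q g])
  have "f dvd pcompose g (monom 1 e)"
    using f g(4) irreducible_dvd_if_common_root[of f y]
    by (simp add: scrim_def to_ac_poly_pcompose to_ac_poly_monom poly_pcompose poly_monom)
  then have "poly (to_ac_poly (pcompose g (monom 1 e))) (inverse y ^ q) = 0"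
    using poly_to_ac_poly_eq_0_dvd scrim_root_inverse_power[OF char q f] by blast
  then show "poly (to_ac_poly g) (inverse (y ^ e) ^ q) = 0"
    by (simp add: to_ac_poly_pcompose to_ac_poly_monom poly_pcompose poly_monom
        power_inverse flip: power_mult, simp add: mult.commute)
qed

lemma scrim_root_power_eq_1:
  fixes f :: "'a::field poly"
  assumes char: "prime CHAR('a)" and q: "q = CHAR('a) ^ k"
    and "n1 > 0" "n2 > 0" "coprime n1 n2" and Omega2: "Omega q n2 = {[:-1, 1:] :: 'a poly}"
    and f: "scrim q f" "poly (to_ac_poly f) y = 0" and y: "y ^ (n1 * n2) = 1"
  shows "y ^ n1 = 1"
proof -
  obtain a b where bezout: "n1 * a = n2 * b + 1"
    using bezout_nat[of n1 n2] assms(3,5) by auto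
  define z where "z = y ^ (n1 * a)"
  have "z ^ n2 = (y ^ (n1 * n2)) ^ a"
    by (simp add: z_def ac_simps flip: power_mult)
  with y have "z ^ n2 = 1" by simp
  have X0: "poly (monom (1::'a) n2 - 1) 0 = -1"
    using assms(4) by (simp add: poly_monom)
  then have "monom (1::'a) n2 - 1 \<noteq> 0" by auto
  then obtain g where g: "lead_coeff g = 1" "irreducible g" "g dvd monom 1 n2 - 1"
    and gz: "poly (to_ac_poly g) z = 0"
    using monic_irreducible_factor_with_root \<open>z ^ n2 = 1\<close>
    by (metis poly_to_ac_poly_X_pow_minus_1 right_minus_eq)
  have "coeff g 0 \<noteq> 0"
  proof
    assume "coeff g 0 = 0"
    obtain h where "monom 1 n2 - 1 = g * h" using g(3) by blast
    then have "-1 = poly g 0 * poly h 0" by (metis X0 poly_mult)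
    with \<open>coeff g 0 = 0\<close> show False by (simp add: poly_0_coeff_0)
  qed
  then have "scrim q g"
    using scrim_minimal_polynomial_of_power[OF char q f g(1,2)] gz by (simp add: z_def)
  with g(3) have "g \<in> Omega q n2" by (simp add: Omega_def)
  with Omega2 have "g = [:-1, 1:]" by simp
  with gz have "z = 1" by (simp add: map_poly_pCons)
  have "y ^ n1 = y ^ n1 * (y ^ (n1 * n2)) ^ b" using y by simp
  also have "\<dots> = y ^ (n1 * (n2 * b + 1))"
    by (simp add: algebra_simps flip: power_mult power_add)
  also have "\<dots> = (y ^ (n1 * a)) ^ n1"
    unfolding bezout[symmetric] by (simp add: ac_simps flip: power_mult)
  finally show ?thesis using \<open>z = 1\<close> by (simp add: z_def)
qed

lemma Omega_mono: "m dvd n \<Longrightarrow> Omega q m \<subseteq> Omega q n"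
  unfolding Omega_def using X_pow_minus_1_dvd dvd_trans by blast

lemma Omega_mult_subset:
  fixes q n1 n2 :: nat
  assumes char: "prime CHAR('a::field)" and q: "q = CHAR('a) ^ k"
    and "n1 > 0" "n2 > 0" "coprime n1 n2" and "Omega q n2 = {[:-1, 1:] :: 'a poly}"
  shows "Omega q (n1 * n2) \<subseteq> (Omega q n1 :: 'a poly set)"
proof
  fix f :: "'a poly"
  assume "f \<in> Omega q (n1 * n2)"
  then have f: "scrim q f" "f dvd monom 1 (n1 * n2) - 1" by (simp_all add: Omega_def)
  then have "irreducible f" by (simp add: scrim_def)
  then have "degree f \<noteq> 0"
    using is_unit_iff_degree irreducible_not_unit not_irreducible_zero by metis
  then obtain y where y: "poly (to_ac_poly f) y = 0"
    using alg_closed_imp_poly_has_root[of "to_ac_poly f"] by auto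
  with f \<open>irreducible f\<close> have "y ^ n1 = 1"
    using scrim_root_power_eq_1[OF char q assms(3-6)] irreducible_dvd_X_pow_minus_1_iff by blast
  with f \<open>irreducible f\<close> y show "f \<in> Omega q n1"
    by (simp add: Omega_def irreducible_dvd_X_pow_minus_1_iff)
qed

theorem theorem2p11:
  fixes q n1 n2 :: nat
  assumes card: "card (UNIV :: 'a::{field,finite} set) = q ^ 2"
    and qpp: "\<exists>p k. prime p \<and> k > 0 \<and> q = p ^ k"
    and n1: "odd n1" "n1 > 0" and n2: "odd n2" "n2 > 0"
    and cop: "coprime n1 n2" "coprime n1 q" "coprime n2 q"
    and h1: "\<forall>f :: 'a poly. lead_coeff f = 1 \<and> irreducible f \<and> f dvd (monom 1 n1 - 1) \<longrightarrow> scrim q f"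
    and h2: "Omega q n2 = {[:-1, 1:] :: 'a poly}"
  shows "card (Omega q (n1 * n2) :: 'a poly set) = card (Omega q n1 :: 'a poly set)"
proof -
  obtain p k where p: "prime p" "k > 0" and q: "q = p ^ k" using qpp by blast
  have "card (UNIV :: 'a set) = p ^ (k * 2)" using card q by (simp add: power_mult)
  with p have "CHAR('a) = p" by (simp add: CHAR_eq_if_card_eq_prime_power)
  with p q have char: "prime CHAR('a)" and q_char: "q = CHAR('a) ^ k" by simp_all
  have "Omega q (n1 * n2) = (Omega q n1 :: 'a poly set)"
    using Omega_mult_subset[OF char q_char n1(2) n2(2) cop(1) h2] Omega_mono[of n1 "n1 * n2" q]
    by auto
  then show ?thesis by simp
qed

end
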